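(* Consider a proof-of-work blockchain in which every block is received by every miner less than $\Delta_B$ time units after it is published, and in which an attacker can instantly learn of any message published on the network and can deliver any message to any miner instantaneously. Suppose honest miners use a tie-breaking rule with acceptance window $w$, and the attacker performs a Match against post-generated block. If $w \ge \Delta_B$, then every honest miner receives the block generated by the honest miner before that honest miner's own acceptance window ends.
   Context: Miners extend a chain of blocks chosen by a predefined fork choice rule (e.g. longest chain). A chain tie occurs when this rule does not determine a unique chain. Each miner records the arrival time of every block, and the arrival time of a chain is the arrival time of its head (most recent block). In a chain tie, a miner applying an acceptance window $w$ considers only those tied chains whose arrival time is at most $w$ after the arrival time of the earliest-arriving tied chain. The acceptance window of a miner thus starts when the first chain of the tie arrives at that miner and ends $w$ later. A Match against post-generated block is the following attack. The attacker successfully generates a block and withholds it. When an honest miner generates and publishes a competing block, the attacker immediately publishes its withheld block, creating a chain tie. *)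

theory Defs
  imports Main "HOL.Real"
begin

text \<open>Blocks have type 'b, miners type 'm. pub b is the time block b is
published; arr m b is the time block b arrives at (is received by) miner m.
The arrival time of a chain is the arrival time of its head, so a chain tie is
represented by the finite nonempty set of the heads of the tied chains.\<close>

definition block_delay_bound :: "real \<Rightarrow> ('b \<Rightarrow> real) \<Rightarrow> ('m \<Rightarrow> 'b \<Rightarrow> real) \<Rightarrow> bool" where
  "block_delay_bound \<Delta>B pub arr \<longleftrightarrow>
     (\<forall>m b. pub b \<le> arr m b \<and> arr m b < pub b + \<Delta>B)"

definition window_start :: "('m \<Rightarrow> 'b \<Rightarrow> real) \<Rightarrow> 'm \<Rightarrow> 'b set \<Rightarrow> real" where
  "window_start arr m T = Min ((arr m) ` T)"

definition window_end :: "real \<Rightarrow> ('m \<Rightarrow> 'b \<Rightarrow> real) \<Rightarrow> 'm \<Rightarrow> 'b set \<Rightarrow> real" where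
  "window_end w arr m T = window_start arr m T + w"

text \<open>Match against post-generated block: the attacker's withheld block bA is
published at the very moment the competing honest block bH is published (the
attacker learns of bH instantly), and the attacker delivers bA to every miner
instantaneously. This creates the chain tie with heads {bH, bA}.\<close>
definition match_post_generated ::
  "('b \<Rightarrow> real) \<Rightarrow> ('m \<Rightarrow> 'b \<Rightarrow> real) \<Rightarrow> 'b \<Rightarrow> 'b \<Rightarrow> bool" where
  "match_post_generated pub arr bH bA \<longleftrightarrow>
     bH \<noteq> bA \<and> pub bA = pub bH \<and> (\<forall>m. arr m bA = pub bA)"

end

theory Submission
  imports Defs
begin

text \<open>Since no block arrives before it is published, a miner's acceptance window
cannot open before the earliest publication among the tied blocks, so it stays open
for at least w \<ge> \<Delta>B after that moment. The earliest-published tied block reaches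
every miner less than \<Delta>B after its publication, hence inside the window. In the
match attack both tied blocks are published simultaneously, so the honest block is
an earliest-published one.\<close>

lemma window_start_ge_publication:
  assumes "block_delay_bound \<Delta>B pub arr"
    and "finite T" "T \<noteq> {}"
    and "\<forall>b \<in> T. t \<le> pub b"
  shows "t \<le> window_start arr m T"
proof -
  have "\<forall>b \<in> T. t \<le> arr m b"
    using assms(1,4) unfolding block_delay_bound_def by (meson order_trans)
  then show ?thesis
    unfolding window_start_def using assms(2,3) by simp
qed

lemma earliest_published_arrives_before_window_end:
  assumes "block_delay_bound \<Delta>B pub arr"
    and "finite T" "b \<in> T"
    and "\<forall>b' \<in> T. pub b \<le> pub b'"
    and "\<Delta>B \<le> w"
  shows "arr m b < window_end w arr m T"
proof -
  have "pub b \<le> window_start arr m T"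
    using window_start_ge_publication[OF assms(1,2) _ assms(4)] assms(3) by blast
  moreover have "arr m b < pub b + \<Delta>B"
    using assms(1) unfolding block_delay_bound_def by blast
  ultimately show ?thesis
    unfolding window_end_def using assms(5) by linarith
qed

theorem theorem1:
  fixes \<Delta>B w :: real
    and pub :: "'b \<Rightarrow> real"
    and arr :: "'m \<Rightarrow> 'b \<Rightarrow> real"
    and honest :: "'m set"
    and bH bA :: 'b
  assumes "block_delay_bound \<Delta>B pub arr"
    and "match_post_generated pub arr bH bA"
    and "w \<ge> \<Delta>B"
  shows "\<forall>m \<in> honest. arr m bH < window_end w arr m {bH, bA}"
proof
  fix m
  have "\<forall>b' \<in> {bH, bA}. pub bH \<le> pub b'"
    using assms(2) unfolding match_post_generated_def by simp
  then show "arr m bH < window_end w arr m {bH, bA}"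
    using earliest_published_arrives_before_window_end[OF assms(1)] assms(3) by simp
qed

end
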